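(* Assume $\lambda\ge0$ and the weights satisfy $w_1>0$ and $w_2>0$ on ${\mathcal T}$. Let $d(\mu,\nu):=\mathrm{ET}_\lambda(\mu,\nu)+\frac{b\lambda}{2}[\mu({\mathcal T})+\nu({\mathcal T})]$. If $\mu,\nu\in{\mathcal M}({\mathcal T})$ satisfy $d(\mu,\nu)=0$, then $\mu=\nu$.
   Context: Let ${\mathcal T}$ be a tree rooted at $r$ with nonnegative edge lengths, identified with the set of its nodes and all points on its edges; $d_{\mathcal T}$ is the tree (path-length) metric. ${\mathcal M}({\mathcal T})$ is the set of nonnegative Borel measures on ${\mathcal T}$ with finite mass. Fix $b\ge0$ and weights $w_1,w_2:{\mathcal T}\to[0,\infty)$. For $\mu,\nu\in{\mathcal M}({\mathcal T})$, $\Pi_{\le}(\mu,\nu)$ is the set of nonnegative finite Borel measures $\gamma$ on ${\mathcal T}\times{\mathcal T}$ with marginals $\gamma_1\le\mu$, $\gamma_2\le\nu$, with $\gamma_1=f_1\mu$, $\gamma_2=f_2\nu$, and $\mathrm{ET}_\lambda(\mu,\nu):=\inf_{\gamma\in\Pi_\le(\mu,\nu)}\Big[\int_{\mathcal T} w_1[1-f_1]\,d\mu+\int_{\mathcal T} w_2[1-f_2]\,d\nu+b\int_{{\mathcal T}\times{\mathcal T}}[d_{\mathcal T}(x,y)-\lambda]\,\gamma(dx,dy)\Big]$. *)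

theory Defs
  imports "HOL-Analysis.Analysis"
begin

text \<open>A finite rooted metric tree: the set T (nodes and all points on edges) with the
  ambient metric dist as the tree (path-length) metric. It is a geodesic space satisfying
  the four-point (0-hyperbolicity) condition, i.e. an R-tree, spanned by the geodesic
  segments from the root r to finitely many nodes.\<close>

definition metric_segment :: "'a::metric_space \<Rightarrow> 'a \<Rightarrow> 'a set \<Rightarrow> 'a set" where
  "metric_segment x y T = {z \<in> T. dist x z + dist z y = dist x y}"

definition geodesic_on :: "'a::metric_space set \<Rightarrow> bool" where
  "geodesic_on T \<longleftrightarrow> (\<forall>x\<in>T. \<forall>y\<in>T. \<exists>\<sigma>::real \<Rightarrow> 'a.
      \<sigma> 0 = x \<and> \<sigma> (dist x y) = y \<and> \<sigma> ` {0..dist x y} \<subseteq> T \<and>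
      (\<forall>s\<in>{0..dist x y}. \<forall>t\<in>{0..dist x y}. dist (\<sigma> s) (\<sigma> t) = \<bar>s - t\<bar>))"

definition four_point_on :: "'a::metric_space set \<Rightarrow> bool" where
  "four_point_on T \<longleftrightarrow> (\<forall>x\<in>T. \<forall>y\<in>T. \<forall>z\<in>T. \<forall>w\<in>T.
      dist x y + dist z w \<le> max (dist x z + dist y w) (dist x w + dist y z))"

definition finite_rooted_metric_tree :: "'a::metric_space set \<Rightarrow> 'a \<Rightarrow> bool" where
  "finite_rooted_metric_tree T r \<longleftrightarrow> r \<in> T \<and> geodesic_on T \<and> four_point_on T \<and>
      (\<exists>N. finite N \<and> N \<subseteq> T \<and> T = (\<Union>v\<in>N. metric_segment r v T))"

text \<open>Finite nonnegative Borel measures on the tree (the whole type is the tree).\<close>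

definition finite_borel_measures :: "'a::metric_space measure set" where
  "finite_borel_measures = {\<mu>. sets \<mu> = sets borel \<and> finite_measure \<mu>}"

text \<open>Admissible partial transport plans together with the densities f1, f2 of
  their marginals with respect to mu and nu (so that gamma_1 = f1 mu <= mu, gamma_2 = f2 nu <= nu).\<close>

definition Pi_le :: "'a::metric_space measure \<Rightarrow> 'a measure \<Rightarrow>
    (('a \<times> 'a) measure \<times> ('a \<Rightarrow> real) \<times> ('a \<Rightarrow> real)) set" where
  "Pi_le \<mu> \<nu> = {(\<gamma>, f1, f2).
      sets \<gamma> = sets (borel \<Otimes>\<^sub>M borel) \<and> finite_measure \<gamma> \<and>
      f1 \<in> borel_measurable borel \<and> f2 \<in> borel_measurable borel \<and>
      (\<forall>x. 0 \<le> f1 x \<and> f1 x \<le> 1) \<and> (\<forall>x. 0 \<le> f2 x \<and> f2 x \<le> 1) \<and>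
      distr \<gamma> borel fst = density \<mu> (\<lambda>x. ennreal (f1 x)) \<and>
      distr \<gamma> borel snd = density \<nu> (\<lambda>x. ennreal (f2 x))}"

definition ET_cost :: "('a::metric_space \<Rightarrow> real) \<Rightarrow> ('a \<Rightarrow> real) \<Rightarrow> real \<Rightarrow> real \<Rightarrow>
    'a measure \<Rightarrow> 'a measure \<Rightarrow> ('a \<times> 'a) measure \<Rightarrow> ('a \<Rightarrow> real) \<Rightarrow> ('a \<Rightarrow> real) \<Rightarrow> ereal" where
  "ET_cost w1 w2 b lam \<mu> \<nu> \<gamma> f1 f2 =
     enn2ereal (\<integral>\<^sup>+ x. ennreal (w1 x * (1 - f1 x)) \<partial>\<mu>)
   + enn2ereal (\<integral>\<^sup>+ y. ennreal (w2 y * (1 - f2 y)) \<partial>\<nu>)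
   + ereal b * (enn2ereal (\<integral>\<^sup>+ p. ennreal (dist (fst p) (snd p)) \<partial>\<gamma>)
                - ereal (lam * measure \<gamma> (space \<gamma>)))"

definition ET :: "('a::metric_space \<Rightarrow> real) \<Rightarrow> ('a \<Rightarrow> real) \<Rightarrow> real \<Rightarrow> real \<Rightarrow>
    'a measure \<Rightarrow> 'a measure \<Rightarrow> ereal" where
  "ET w1 w2 b lam \<mu> \<nu> = (INF (\<gamma>, f1, f2) \<in> Pi_le \<mu> \<nu>. ET_cost w1 w2 b lam \<mu> \<nu> \<gamma> f1 f2)"

definition ET_dist :: "('a::metric_space \<Rightarrow> real) \<Rightarrow> ('a \<Rightarrow> real) \<Rightarrow> real \<Rightarrow> real \<Rightarrow>
    'a measure \<Rightarrow> 'a measure \<Rightarrow> ereal" where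
  "ET_dist w1 w2 b lam \<mu> \<nu> = ET w1 w2 b lam \<mu> \<nu>
     + ereal (b * lam / 2 * (measure \<mu> (space \<mu>) + measure \<nu> (space \<nu>)))"

end

theory Submission
  imports Defs
begin

text \<open>A partial plan \<gamma> moves at most min(\<mu>(T), \<nu>(T)) mass, so the term
  b \<lambda>/2 (\<mu>(T) + \<nu>(T)) of the distance absorbs -b \<lambda> \<gamma>(T); hence a vanishing distance yields
  plans whose unmatched weight \<integral> w1 (1 - f1) d\<mu> and transport cost \<integral> d(x,y) d\<gamma> are both
  arbitrarily small. Fix a closed set C. Its \<mu>-mass is either sent by \<gamma> into the
  \<delta>-thickening of C (at most the \<nu>-mass of the thickening), or sent farther (at most
  cost/\<delta>, by Markov), or left unmatched (at most \<mu>{w1 < \<eta>} + unmatched weight/\<eta>). Letting the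
  plan improve and then \<delta>, \<eta> \<rightarrow> 0 gives \<mu>(C) \<le> \<nu>(C). Transposing plans shows that the
  distance does not increase when the roles of \<mu> and \<nu> are exchanged, which gives the
  reverse inequality, and finite Borel measures agreeing on closed sets are equal.\<close>

text \<open>Unlike \<open>nn_integral_distr\<close>, no measurability of f is required: the distance
  need not be measurable for \<open>borel \<Otimes>\<^sub>M borel\<close> on a non-separable space.\<close>

lemma nn_integral_distr_le:
  assumes T: "T \<in> measurable M N" and le: "\<And>x. x \<in> space M \<Longrightarrow> f (T x) \<le> g x"
  shows "(\<integral>\<^sup>+y. f y \<partial>distr M N T) \<le> (\<integral>\<^sup>+x. g x \<partial>M)"
  unfolding nn_integral_def[of "distr M N T"]
proof (rule SUP_least, clarify)
  fix h assume h: "simple_function (distr M N T) h" "h \<le> f"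
  have "integral\<^sup>S (distr M N T) h = (\<integral>\<^sup>+y. h y \<partial>distr M N T)"
    using h(1) by (rule nn_integral_eq_simple_integral[symmetric])
  also have "\<dots> = (\<integral>\<^sup>+x. h (T x) \<partial>M)"
    using T h(1) by (intro nn_integral_distr borel_measurable_simple_function)
  also have "\<dots> \<le> (\<integral>\<^sup>+x. g x \<partial>M)"
    using h le by (intro nn_integral_mono) (auto simp: le_fun_def intro: order_trans)
  finally show "integral\<^sup>S (distr M N T) h \<le> (\<integral>\<^sup>+x. g x \<partial>M)" .
qed

lemma Markov_emeasure_le:
  assumes S: "S \<in> sets M" and c: "c > 0" and ge: "\<And>x. x \<in> S \<Longrightarrow> c \<le> f x"
  shows "emeasure M S \<le> ennreal (1 / c) * (\<integral>\<^sup>+x. ennreal (f x) \<partial>M)"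
proof -
  have "ennreal (1 / c) * ennreal c = 1"
    using c by (simp flip: ennreal_mult)
  then have "emeasure M S = ennreal (1 / c) * (\<integral>\<^sup>+x. ennreal c * indicator S x \<partial>M)"
    using S by (simp add: nn_integral_cmult_indicator mult.assoc[symmetric])
  also have "\<dots> \<le> ennreal (1 / c) * (\<integral>\<^sup>+x. ennreal (f x) \<partial>M)"
    using ge by (intro mult_left_mono nn_integral_mono) (auto simp: indicator_def ennreal_leI)
  finally show ?thesis .
qed

lemma nn_integral_le_sublevel_plus:
  assumes g: "g \<in> borel_measurable M" "\<And>x. 0 \<le> g x \<and> g x \<le> 1"
    and w: "w \<in> borel_measurable M" "\<And>x. 0 \<le> w x" and \<eta>: "\<eta> > 0"
  shows "(\<integral>\<^sup>+x. ennreal (g x) \<partial>M)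
    \<le> emeasure M {x \<in> space M. w x < \<eta>} + ennreal (1 / \<eta>) * (\<integral>\<^sup>+x. ennreal (w x * g x) \<partial>M)"
proof -
  have "ennreal (g x) \<le> indicator {x \<in> space M. w x < \<eta>} x + ennreal (1 / \<eta>) * ennreal (w x * g x)"
    if "x \<in> space M" for x
  proof (cases "w x < \<eta>")
    case True
    then show ?thesis using that g(2)[of x] by (simp add: add_increasing2)
  next
    case False
    then have "\<eta> * g x \<le> w x * g x"
      using g(2)[of x] by (intro mult_right_mono) auto
    then have "g x \<le> 1 / \<eta> * (w x * g x)"
      using \<eta> by (simp add: field_simps)
    then show ?thesis
      using False \<eta> g(2)[of x] w(2)[of x] by (simp add: ennreal_mult[symmetric] ennreal_leI)
  qed
  then have "(\<integral>\<^sup>+x. ennreal (g x) \<partial>M)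
      \<le> (\<integral>\<^sup>+x. indicator {x \<in> space M. w x < \<eta>} x + ennreal (1 / \<eta>) * ennreal (w x * g x) \<partial>M)"
    by (rule nn_integral_mono)
  also have "\<dots> = emeasure M {x \<in> space M. w x < \<eta>} + ennreal (1 / \<eta>) * (\<integral>\<^sup>+x. ennreal (w x * g x) \<partial>M)"
    using g(1) w(1) by (simp add: nn_integral_add nn_integral_cmult)
  finally show ?thesis .
qed

lemma inverse_Suc_antimono:
  "m \<le> n \<Longrightarrow> 1 / real (Suc n) \<le> 1 / real (Suc m)"
  by (intro divide_left_mono) auto

lemma tendsto_measure_thickening:
  fixes M :: "'a::metric_space measure"
  assumes M: "sets M = sets borel" "finite_measure M" and C: "closed C" "C \<noteq> {}"
  shows "(\<lambda>n. measure M {y. infdist y C < 1 / Suc n}) \<longlonglongrightarrow> measure M C"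
proof -
  define U where "U n = {y. infdist y C < 1 / Suc n}" for n :: nat
  have "range U \<subseteq> sets M"
    unfolding U_def M(1) by (auto intro!: borel_open open_Collect_less continuous_intros)
  moreover have "decseq U"
    unfolding decseq_def U_def using inverse_Suc_antimono by (auto intro: less_le_trans)
  moreover have "(\<Inter>n. U n) = C"
  proof (intro equalityI subsetI)
    fix x assume x: "x \<in> (\<Inter>n. U n)"
    have "infdist x C \<le> 0"
    proof (rule ccontr)
      assume "\<not> infdist x C \<le> 0"
      then obtain n where "1 / Suc n < infdist x C" by (metis not_le nat_approx_posE)
      moreover have "x \<in> U n" using x by blast
      ultimately show False by (simp add: U_def)
    qed
    then show "x \<in> C"
      using in_closed_iff_infdist_zero[OF C] infdist_nonneg[of x C] by simp
  qed (auto simp: U_def)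
  ultimately show ?thesis
    using finite_measure.finite_Lim_measure_decseq[OF M(2)] unfolding U_def by metis
qed

lemma tendsto_measure_sublevel_zero:
  assumes M: "finite_measure M" and w: "w \<in> borel_measurable M" "\<And>x. 0 < w x"
  shows "(\<lambda>n. measure M {x \<in> space M. w x < 1 / Suc n}) \<longlonglongrightarrow> 0"
proof -
  define W where "W n = {x \<in> space M. w x < 1 / Suc n}" for n :: nat
  have "W n \<in> sets M" for n
    unfolding W_def using w(1) by measurable
  then have "range W \<subseteq> sets M" by auto
  moreover have "decseq W"
    unfolding decseq_def W_def using inverse_Suc_antimono by (auto intro: less_le_trans)
  moreover have "(\<Inter>n. W n) = {}"
  proof (intro equalityI subsetI)
    fix x assume x: "x \<in> (\<Inter>n. W n)"
    obtain n where "1 / Suc n < w x" using w(2)[of x] by (auto elim: nat_approx_posE)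
    moreover have "x \<in> W n" using x by blast
    ultimately show "x \<in> {}" by (simp add: W_def)
  qed simp
  ultimately show ?thesis
    using finite_measure.finite_Lim_measure_decseq[OF M] unfolding W_def by (metis measure_empty)
qed

lemma finite_borel_measure_eqI_closed:
  assumes M: "sets M = sets borel" "finite_measure M" and N: "sets N = sets borel" "finite_measure N"
    and eq: "\<And>C. closed C \<Longrightarrow> measure M C = measure N C"
  shows "M = N"
proof (rule measure_eqI_generator_eq[where E = "Collect closed" and \<Omega> = UNIV and A = "\<lambda>_. UNIV"])
  have "sets borel = sigma_sets UNIV (Collect closed)"
    by (simp add: borel_eq_closed)
  then show "sets M = sigma_sets UNIV (Collect closed)" "sets N = sigma_sets UNIV (Collect closed)"
    using M N by simp_all
  show "emeasure M C = emeasure N C" if "C \<in> Collect closed" for C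
    using eq[of C] that M N by (simp add: finite_measure.emeasure_eq_measure)
qed (auto simp: Int_stable_def finite_measure.emeasure_eq_measure M)

lemma Pi_le_sets:
  assumes "(\<gamma>, f1, f2) \<in> Pi_le \<mu> \<nu>"
  shows "sets \<mu> = sets borel" "sets \<nu> = sets borel"
proof -
  have "sets (distr \<gamma> borel fst) = sets (density \<mu> (\<lambda>x. ennreal (f1 x)))"
    "sets (distr \<gamma> borel snd) = sets (density \<nu> (\<lambda>x. ennreal (f2 x)))"
    using assms by (simp_all add: Pi_le_def)
  then show "sets \<mu> = sets borel" "sets \<nu> = sets borel" by simp_all
qed

lemma Pi_le_space:
  assumes plan: "(\<gamma>, f1, f2) \<in> Pi_le \<mu> \<nu>"
  shows "space \<mu> = UNIV" "space \<nu> = UNIV" "space \<gamma> = UNIV"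
  using sets_eq_imp_space_eq[OF Pi_le_sets(1)[OF plan]] sets_eq_imp_space_eq[OF Pi_le_sets(2)[OF plan]]
    plan sets_eq_imp_space_eq[of \<gamma> "borel \<Otimes>\<^sub>M borel"]
  by (simp_all add: Pi_le_def space_pair_measure)

lemma Pi_le_fst_density:
  assumes plan: "(\<gamma>, f1, f2) \<in> Pi_le \<mu> \<nu>"
  shows "f1 \<in> borel_measurable \<mu>" "0 \<le> f1 x" "f1 x \<le> 1"
  using plan measurable_cong_sets[OF Pi_le_sets(1)[OF plan] refl] by (auto simp: Pi_le_def)

lemma Pi_le_emeasure_fst:
  assumes plan: "(\<gamma>, f1, f2) \<in> Pi_le \<mu> \<nu>" and A: "A \<in> sets borel"
  shows "emeasure \<gamma> (A \<times> UNIV) = (\<integral>\<^sup>+x. ennreal (f1 x) * indicator A x \<partial>\<mu>)"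
proof -
  have fst: "fst \<in> measurable \<gamma> borel"
    using plan measurable_cong_sets[of \<gamma> "borel \<Otimes>\<^sub>M borel"] by (auto simp: Pi_le_def)
  have "emeasure \<gamma> (A \<times> UNIV) = emeasure (distr \<gamma> borel fst) A"
    using A fst Pi_le_space(3)[OF plan] by (simp add: emeasure_distr vimage_fst)
  also have "\<dots> = emeasure (density \<mu> (\<lambda>x. ennreal (f1 x))) A"
    using plan by (simp add: Pi_le_def)
  also have "\<dots> = (\<integral>\<^sup>+x. ennreal (f1 x) * indicator A x \<partial>\<mu>)"
    using plan A Pi_le_sets(1)[OF plan] by (subst emeasure_density) (auto simp: Pi_le_def)
  finally show ?thesis .
qed

lemma Pi_le_emeasure_fst_le:
  assumes plan: "(\<gamma>, f1, f2) \<in> Pi_le \<mu> \<nu>" and A: "A \<in> sets borel"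
  shows "emeasure \<gamma> (A \<times> UNIV) \<le> emeasure \<mu> A"
proof -
  have "emeasure \<gamma> (A \<times> UNIV) = (\<integral>\<^sup>+x\<in>A. ennreal (f1 x) \<partial>\<mu>)"
    by (rule Pi_le_emeasure_fst[OF plan A])
  also have "\<dots> \<le> (\<integral>\<^sup>+x. indicator A x \<partial>\<mu>)"
    using Pi_le_fst_density(3)[OF plan] by (intro nn_integral_mono) (auto simp: indicator_def)
  also have "\<dots> = emeasure \<mu> A"
    using A Pi_le_sets(1)[OF plan] by simp
  finally show ?thesis .
qed

lemma Pi_le_emeasure_split:
  assumes plan: "(\<gamma>, f1, f2) \<in> Pi_le \<mu> \<nu>" and A: "A \<in> sets borel"
  shows "emeasure \<mu> A = emeasure \<gamma> (A \<times> UNIV) + (\<integral>\<^sup>+x\<in>A. ennreal (1 - f1 x) \<partial>\<mu>)"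
proof -
  have "emeasure \<mu> A = (\<integral>\<^sup>+x. indicator A x \<partial>\<mu>)"
    using A Pi_le_sets(1)[OF plan] by simp
  also have "\<dots> = (\<integral>\<^sup>+x. ennreal (f1 x) * indicator A x + ennreal (1 - f1 x) * indicator A x \<partial>\<mu>)"
    using Pi_le_fst_density(2,3)[OF plan]
    by (intro nn_integral_cong) (auto simp: indicator_def simp flip: ennreal_plus)
  also have "\<dots> = (\<integral>\<^sup>+x\<in>A. ennreal (f1 x) \<partial>\<mu>) + (\<integral>\<^sup>+x\<in>A. ennreal (1 - f1 x) \<partial>\<mu>)"
    using A Pi_le_sets(1)[OF plan] Pi_le_fst_density(1)[OF plan] by (intro nn_integral_add) auto
  finally show ?thesis
    by (simp add: Pi_le_emeasure_fst[OF plan A])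
qed

definition transpose_plan :: "('a::metric_space \<times> 'a) measure \<Rightarrow> ('a \<times> 'a) measure" where
  "transpose_plan \<gamma> = distr \<gamma> (borel \<Otimes>\<^sub>M borel) (\<lambda>(x, y). (y, x))"

lemma Pi_le_measurable_swap:
  assumes "(\<gamma>, f1, f2) \<in> Pi_le \<mu> \<nu>"
  shows "(\<lambda>(x, y). (y, x)) \<in> measurable \<gamma> (borel \<Otimes>\<^sub>M borel)"
  using assms measurable_pair_swap' measurable_cong_sets[of \<gamma> "borel \<Otimes>\<^sub>M borel"]
  by (auto simp: Pi_le_def)

lemma Pi_le_transpose:
  assumes plan: "(\<gamma>, f1, f2) \<in> Pi_le \<mu> \<nu>"
  shows "(transpose_plan \<gamma>, f2, f1) \<in> Pi_le \<nu> \<mu>"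
proof -
  note swap = Pi_le_measurable_swap[OF plan]
  have "finite_measure (transpose_plan \<gamma>)"
    using plan swap by (auto simp: Pi_le_def transpose_plan_def intro: finite_measure.finite_measure_distr)
  moreover have "distr (transpose_plan \<gamma>) borel fst = distr \<gamma> borel snd"
    "distr (transpose_plan \<gamma>) borel snd = distr \<gamma> borel fst"
    using swap by (simp_all add: transpose_plan_def distr_distr comp_def case_prod_beta)
  ultimately show ?thesis
    using plan by (simp add: Pi_le_def transpose_plan_def)
qed

lemma transpose_plan_emeasure:
  assumes plan: "(\<gamma>, f1, f2) \<in> Pi_le \<mu> \<nu>" and S: "S \<in> sets (borel \<Otimes>\<^sub>M borel)"
  shows "emeasure (transpose_plan \<gamma>) S = emeasure \<gamma> ((\<lambda>(x, y). (y, x)) -` S)"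
  using S Pi_le_measurable_swap[OF plan] Pi_le_space(3)[OF plan]
  by (simp add: transpose_plan_def emeasure_distr)

lemma transpose_plan_nn_integral_dist_le:
  assumes plan: "(\<gamma>, f1, f2) \<in> Pi_le \<mu> \<nu>"
  shows "(\<integral>\<^sup>+p. ennreal (dist (fst p) (snd p)) \<partial>transpose_plan \<gamma>)
       \<le> (\<integral>\<^sup>+p. ennreal (dist (fst p) (snd p)) \<partial>\<gamma>)"
  unfolding transpose_plan_def
  by (rule nn_integral_distr_le[OF Pi_le_measurable_swap[OF plan]]) (auto simp: dist_commute)

lemma Pi_le_emeasure_snd_le:
  assumes plan: "(\<gamma>, f1, f2) \<in> Pi_le \<mu> \<nu>" and A: "A \<in> sets borel"
  shows "emeasure \<gamma> (UNIV \<times> A) \<le> emeasure \<nu> A"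
proof -
  have "A \<times> UNIV \<in> sets (borel \<Otimes>\<^sub>M borel)"
    using A by (auto intro: pair_measureI)
  moreover have "(\<lambda>(x, y). (y, x)) -` (A \<times> UNIV) = UNIV \<times> A" by auto
  ultimately have "emeasure \<gamma> (UNIV \<times> A) = emeasure (transpose_plan \<gamma>) (A \<times> UNIV)"
    by (metis transpose_plan_emeasure[OF plan])
  also have "\<dots> \<le> emeasure \<nu> A"
    by (rule Pi_le_emeasure_fst_le[OF Pi_le_transpose[OF plan] A])
  finally show ?thesis .
qed

lemma Pi_le_total_mass_le:
  assumes plan: "(\<gamma>, f1, f2) \<in> Pi_le \<mu> \<nu>" and fin: "finite_measure \<mu>" "finite_measure \<nu>"
  shows "measure \<gamma> (space \<gamma>) \<le> measure \<mu> (space \<mu>)" "measure \<gamma> (space \<gamma>) \<le> measure \<nu> (space \<nu>)"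
proof -
  have "emeasure \<gamma> (space \<gamma>) \<le> emeasure \<mu> (space \<mu>)"
    using Pi_le_emeasure_fst_le[OF plan, of UNIV] Pi_le_space[OF plan] by simp
  moreover have "emeasure \<gamma> (space \<gamma>) \<le> emeasure \<nu> (space \<nu>)"
    using Pi_le_emeasure_snd_le[OF plan, of UNIV] Pi_le_space[OF plan] by simp
  moreover have "finite_measure \<gamma>"
    using plan by (simp add: Pi_le_def)
  ultimately show "measure \<gamma> (space \<gamma>) \<le> measure \<mu> (space \<mu>)"
    "measure \<gamma> (space \<gamma>) \<le> measure \<nu> (space \<nu>)"
    using fin by (simp_all add: finite_measure.emeasure_eq_measure)
qed

lemma Pi_le_emeasure_le:
  assumes plan: "(\<gamma>, f1, f2) \<in> Pi_le \<mu> \<nu>" and C: "C \<in> sets borel" and U: "U \<in> sets borel"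
  shows "emeasure \<mu> C \<le> emeasure \<nu> U + emeasure \<gamma> (C \<times> - U) + (\<integral>\<^sup>+x. ennreal (1 - f1 x) \<partial>\<mu>)"
proof -
  have sets: "UNIV \<times> U \<in> sets \<gamma>" "C \<times> - U \<in> sets \<gamma>"
    using plan C U by (auto simp: Pi_le_def intro!: pair_measureI)
  have "emeasure \<gamma> (C \<times> UNIV) \<le> emeasure \<gamma> (UNIV \<times> U \<union> C \<times> - U)"
    using sets by (intro emeasure_mono) auto
  also have "\<dots> \<le> emeasure \<gamma> (UNIV \<times> U) + emeasure \<gamma> (C \<times> - U)"
    using sets by (rule emeasure_subadditive)
  also have "\<dots> \<le> emeasure \<nu> U + emeasure \<gamma> (C \<times> - U)"
    using Pi_le_emeasure_snd_le[OF plan U] by (rule add_right_mono)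
  finally have matched: "emeasure \<gamma> (C \<times> UNIV) \<le> emeasure \<nu> U + emeasure \<gamma> (C \<times> - U)" .
  have unmatched: "(\<integral>\<^sup>+x\<in>C. ennreal (1 - f1 x) \<partial>\<mu>) \<le> (\<integral>\<^sup>+x. ennreal (1 - f1 x) \<partial>\<mu>)"
    by (intro nn_integral_mono) (auto simp: indicator_def)
  show ?thesis
    unfolding Pi_le_emeasure_split[OF plan C] using add_mono[OF matched unmatched] .
qed

lemma Pi_le_emeasure_far_le:
  assumes plan: "(\<gamma>, f1, f2) \<in> Pi_le \<mu> \<nu>" and C: "closed C" and \<delta>: "\<delta> > 0"
  shows "emeasure \<gamma> (C \<times> - {y. infdist y C < \<delta>})
    \<le> ennreal (1 / \<delta>) * (\<integral>\<^sup>+p. ennreal (dist (fst p) (snd p)) \<partial>\<gamma>)"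
proof (rule Markov_emeasure_le[OF _ \<delta>])
  have "{y. infdist y C < \<delta>} \<in> sets borel"
    by (intro borel_open open_Collect_less) (auto intro: continuous_intros)
  then show "C \<times> - {y. infdist y C < \<delta>} \<in> sets \<gamma>"
    using plan C by (auto simp: Pi_le_def intro!: pair_measureI)
  fix p assume "p \<in> C \<times> - {y. infdist y C < \<delta>}"
  then have "\<delta> \<le> infdist (snd p) C" and "infdist (snd p) C \<le> dist (snd p) (fst p)"
    by (auto intro: infdist_le)
  then show "\<delta> \<le> dist (fst p) (snd p)" by (simp add: dist_commute)
qed

lemma Pi_le_unmatched_le:
  assumes plan: "(\<gamma>, f1, f2) \<in> Pi_le \<mu> \<nu>"
    and w: "w \<in> borel_measurable borel" "\<And>x. 0 \<le> w x" and \<eta>: "\<eta> > 0"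
  shows "(\<integral>\<^sup>+x. ennreal (1 - f1 x) \<partial>\<mu>)
    \<le> emeasure \<mu> {x. w x < \<eta>} + ennreal (1 / \<eta>) * (\<integral>\<^sup>+x. ennreal (w x * (1 - f1 x)) \<partial>\<mu>)"
proof -
  have "w \<in> borel_measurable \<mu>"
    using w(1) measurable_cong_sets[OF Pi_le_sets(1)[OF plan] refl] by blast
  then show ?thesis
    using nn_integral_le_sublevel_plus[of "\<lambda>x. 1 - f1 x" \<mu> w \<eta>] Pi_le_fst_density[OF plan]
      w(2) \<eta> Pi_le_space(1)[OF plan]
    by auto
qed

lemma Pi_le_emeasure_le_thickening:
  assumes plan: "(\<gamma>, f1, f2) \<in> Pi_le \<mu> \<nu>" and C: "closed C" and \<delta>: "\<delta> > 0"
    and w: "w \<in> borel_measurable borel" "\<And>x. 0 \<le> w x" and \<eta>: "\<eta> > 0"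
  shows "emeasure \<mu> C \<le> emeasure \<nu> {y. infdist y C < \<delta>} + emeasure \<mu> {x. w x < \<eta>}
    + ennreal (1 / \<delta>) * (\<integral>\<^sup>+p. ennreal (dist (fst p) (snd p)) \<partial>\<gamma>)
    + ennreal (1 / \<eta>) * (\<integral>\<^sup>+x. ennreal (w x * (1 - f1 x)) \<partial>\<mu>)"
proof -
  have "{y. infdist y C < \<delta>} \<in> sets borel"
    by (intro borel_open open_Collect_less) (auto intro: continuous_intros)
  then have "emeasure \<mu> C \<le> emeasure \<nu> {y. infdist y C < \<delta>}
      + emeasure \<gamma> (C \<times> - {y. infdist y C < \<delta>}) + (\<integral>\<^sup>+x. ennreal (1 - f1 x) \<partial>\<mu>)"
    using plan C by (intro Pi_le_emeasure_le) auto
  also have "\<dots> \<le> emeasure \<nu> {y. infdist y C < \<delta>}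
      + ennreal (1 / \<delta>) * (\<integral>\<^sup>+p. ennreal (dist (fst p) (snd p)) \<partial>\<gamma>)
      + (emeasure \<mu> {x. w x < \<eta>} + ennreal (1 / \<eta>) * (\<integral>\<^sup>+x. ennreal (w x * (1 - f1 x)) \<partial>\<mu>))"
    by (intro add_mono order_refl Pi_le_emeasure_far_le[OF plan C \<delta>] Pi_le_unmatched_le[OF plan w \<eta>])
  finally show ?thesis
    by (simp add: ac_simps)
qed

lemma Pi_le_mass_term_le:
  assumes plan: "(\<gamma>, f1, f2) \<in> Pi_le \<mu> \<nu>" and fin: "finite_measure \<mu>" "finite_measure \<nu>"
    and "b \<ge> 0" "lam \<ge> 0"
  shows "b * lam * measure \<gamma> (space \<gamma>) \<le> b * lam / 2 * (measure \<mu> (space \<mu>) + measure \<nu> (space \<nu>))"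
proof -
  have "b * lam * measure \<gamma> (space \<gamma>) = b * lam / 2 * (measure \<gamma> (space \<gamma>) + measure \<gamma> (space \<gamma>))"
    by simp
  also have "\<dots> \<le> b * lam / 2 * (measure \<mu> (space \<mu>) + measure \<nu> (space \<nu>))"
    using assms Pi_le_total_mass_le[OF plan fin] by (intro mult_left_mono add_mono) auto
  finally show ?thesis .
qed

lemma ET_cost_transpose_le:
  assumes plan: "(\<gamma>, f1, f2) \<in> Pi_le \<mu> \<nu>" and b: "b \<ge> 0"
  shows "ET_cost w2 w1 b lam \<nu> \<mu> (transpose_plan \<gamma>) f2 f1 \<le> ET_cost w1 w2 b lam \<mu> \<nu> \<gamma> f1 f2"
proof -
  have "measure (transpose_plan \<gamma>) (space (transpose_plan \<gamma>)) = measure \<gamma> (space \<gamma>)"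
    using measure_distr[OF Pi_le_measurable_swap[OF plan] sets.top] Pi_le_space(3)[OF plan]
    by (simp add: transpose_plan_def space_pair_measure)
  moreover have "ereal b * (enn2ereal (\<integral>\<^sup>+p. ennreal (dist (fst p) (snd p)) \<partial>transpose_plan \<gamma>) - x)
      \<le> ereal b * (enn2ereal (\<integral>\<^sup>+p. ennreal (dist (fst p) (snd p)) \<partial>\<gamma>) - x)" for x
    using b transpose_plan_nn_integral_dist_le[OF plan]
    by (intro ereal_mult_left_mono ereal_minus_mono) (auto simp: less_eq_ennreal.rep_eq)
  ultimately show ?thesis
    unfolding ET_cost_def by (simp add: add.commute add_right_mono)
qed

lemma ET_dist_transpose_le:
  assumes "b \<ge> 0"
  shows "ET_dist w2 w1 b lam \<nu> \<mu> \<le> ET_dist w1 w2 b lam \<mu> \<nu>"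
proof -
  have "ET w2 w1 b lam \<nu> \<mu> \<le> ET w1 w2 b lam \<mu> \<nu>"
    unfolding ET_def
  proof (rule INF_greatest, clarify)
    fix \<gamma> f1 f2 assume plan: "(\<gamma>, f1, f2) \<in> Pi_le \<mu> \<nu>"
    have "(INF (\<gamma>', g1, g2) \<in> Pi_le \<nu> \<mu>. ET_cost w2 w1 b lam \<nu> \<mu> \<gamma>' g1 g2)
        \<le> ET_cost w2 w1 b lam \<nu> \<mu> (transpose_plan \<gamma>) f2 f1"
      using Pi_le_transpose[OF plan] by (rule INF_lower2) simp
    also have "\<dots> \<le> ET_cost w1 w2 b lam \<mu> \<nu> \<gamma> f1 f2"
      using plan assms by (rule ET_cost_transpose_le)
    finally show "(INF (\<gamma>', g1, g2) \<in> Pi_le \<nu> \<mu>. ET_cost w2 w1 b lam \<nu> \<mu> \<gamma>' g1 g2)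
        \<le> ET_cost w1 w2 b lam \<mu> \<nu> \<gamma> f1 f2" .
  qed
  then show ?thesis
    unfolding ET_dist_def by (simp add: add.commute add_right_mono)
qed

lemma ET_cost_less_realE:
  assumes "ET_cost w1 w2 b lam \<mu> \<nu> \<gamma> f1 f2 < ereal t" and "b > 0"
  obtains a a2 d where "0 \<le> a" "0 \<le> a2" "0 \<le> d"
    "(\<integral>\<^sup>+x. ennreal (w1 x * (1 - f1 x)) \<partial>\<mu>) = ennreal a"
    "(\<integral>\<^sup>+y. ennreal (w2 y * (1 - f2 y)) \<partial>\<nu>) = ennreal a2"
    "(\<integral>\<^sup>+p. ennreal (dist (fst p) (snd p)) \<partial>\<gamma>) = ennreal d"
    "a + a2 + b * (d - lam * measure \<gamma> (space \<gamma>)) < t"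
  using assms unfolding ET_cost_def
  by (cases "\<integral>\<^sup>+x. ennreal (w1 x * (1 - f1 x)) \<partial>\<mu>" rule: ennreal_cases;
      cases "\<integral>\<^sup>+y. ennreal (w2 y * (1 - f2 y)) \<partial>\<nu>" rule: ennreal_cases;
      cases "\<integral>\<^sup>+p. ennreal (dist (fst p) (snd p)) \<partial>\<gamma>" rule: ennreal_cases) auto

lemma ET_dist_nonpos_imp_cheap_plan:
  assumes d: "ET_dist w1 w2 b lam \<mu> \<nu> \<le> 0" and b: "b > 0" and lam: "lam \<ge> 0"
    and fin: "finite_measure \<mu>" "finite_measure \<nu>" and e: "\<epsilon> > 0"
  obtains \<gamma> f1 f2 where "(\<gamma>, f1, f2) \<in> Pi_le \<mu> \<nu>"
    "(\<integral>\<^sup>+x. ennreal (w1 x * (1 - f1 x)) \<partial>\<mu>) \<le> ennreal \<epsilon>"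
    "(\<integral>\<^sup>+p. ennreal (dist (fst p) (snd p)) \<partial>\<gamma>) \<le> ennreal \<epsilon>"
proof -
  define c where "c = b * lam / 2 * (measure \<mu> (space \<mu>) + measure \<nu> (space \<nu>))"
  define e' where "e' = min \<epsilon> (b * \<epsilon>)"
  have "e' > 0" using b e by (simp add: e'_def)
  moreover have "ET w1 w2 b lam \<mu> \<nu> \<le> ereal (- c)"
    using d unfolding ET_dist_def c_def by (cases "ET w1 w2 b lam \<mu> \<nu>") auto
  ultimately have "ET w1 w2 b lam \<mu> \<nu> < ereal (e' - c)"
    by (simp add: le_less_trans)
  then obtain \<gamma> f1 f2 where plan: "(\<gamma>, f1, f2) \<in> Pi_le \<mu> \<nu>"
    and "ET_cost w1 w2 b lam \<mu> \<nu> \<gamma> f1 f2 < ereal (e' - c)"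
    unfolding ET_def by (auto simp: INF_less_iff)
  then obtain a a2 d where a: "0 \<le> a" "0 \<le> a2" "0 \<le> d"
    and A: "(\<integral>\<^sup>+x. ennreal (w1 x * (1 - f1 x)) \<partial>\<mu>) = ennreal a"
    and D: "(\<integral>\<^sup>+p. ennreal (dist (fst p) (snd p)) \<partial>\<gamma>) = ennreal d"
    and cost: "a + a2 + b * (d - lam * measure \<gamma> (space \<gamma>)) < e' - c"
    using b by (elim ET_cost_less_realE)
  have "b * lam * measure \<gamma> (space \<gamma>) \<le> c"
    unfolding c_def using Pi_le_mass_term_le[OF plan fin] b lam by simp
  then have sum: "a + a2 + b * d < e'"
    using cost by (simp add: algebra_simps)
  have "0 \<le> b * d" using a b by simp
  have "a \<le> \<epsilon>"
    using sum a \<open>0 \<le> b * d\<close> unfolding e'_def by linarith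
  have "b * d \<le> b * \<epsilon>"
    using sum a unfolding e'_def by linarith
  then have "d \<le> \<epsilon>"
    using b by simp
  show thesis
  proof (rule that[OF plan])
    show "(\<integral>\<^sup>+x. ennreal (w1 x * (1 - f1 x)) \<partial>\<mu>) \<le> ennreal \<epsilon>"
      unfolding A using \<open>a \<le> \<epsilon>\<close> by (rule ennreal_leI)
    show "(\<integral>\<^sup>+p. ennreal (dist (fst p) (snd p)) \<partial>\<gamma>) \<le> ennreal \<epsilon>"
      unfolding D using \<open>d \<le> \<epsilon>\<close> by (rule ennreal_leI)
  qed
qed

lemma ET_dist_nonpos_imp_emeasure_le_thickening:
  assumes d: "ET_dist w1 w2 b lam \<mu> \<nu> \<le> 0" and b: "b > 0" and lam: "lam \<ge> 0"
    and fin: "finite_measure \<mu>" "finite_measure \<nu>"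
    and w1: "w1 \<in> borel_measurable borel" "\<And>x. 0 \<le> w1 x"
    and C: "closed C" and \<delta>: "\<delta> > 0" and \<eta>: "\<eta> > 0"
  shows "emeasure \<mu> C \<le> emeasure \<nu> {y. infdist y C < \<delta>} + emeasure \<mu> {x. w1 x < \<eta>}"
proof (rule ennreal_le_epsilon)
  fix e :: real assume e: "e > 0"
  define \<epsilon> where "\<epsilon> = e / (1 / \<delta> + 1 / \<eta>)"
  have k: "1 / \<delta> + 1 / \<eta> > 0" using \<delta> \<eta> by (simp add: add_pos_pos)
  then have "\<epsilon> > 0" using e by (simp add: \<epsilon>_def)
  then obtain \<gamma> f1 f2 where plan: "(\<gamma>, f1, f2) \<in> Pi_le \<mu> \<nu>"
    and A: "(\<integral>\<^sup>+x. ennreal (w1 x * (1 - f1 x)) \<partial>\<mu>) \<le> ennreal \<epsilon>"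
    and D: "(\<integral>\<^sup>+p. ennreal (dist (fst p) (snd p)) \<partial>\<gamma>) \<le> ennreal \<epsilon>"
    using ET_dist_nonpos_imp_cheap_plan[OF d b lam fin] by blast
  have "1 / \<delta> * \<epsilon> + 1 / \<eta> * \<epsilon> = (1 / \<delta> + 1 / \<eta>) * \<epsilon>"
    by (simp add: distrib_right)
  also have "\<dots> = e"
    using k by (simp add: \<epsilon>_def)
  finally have bound: "ennreal (1 / \<delta>) * ennreal \<epsilon> + ennreal (1 / \<eta>) * ennreal \<epsilon> = ennreal e"
    using \<delta> \<eta> \<open>\<epsilon> > 0\<close> by (simp flip: ennreal_mult ennreal_plus)
  have "emeasure \<mu> C \<le> emeasure \<nu> {y. infdist y C < \<delta>} + emeasure \<mu> {x. w1 x < \<eta>}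
      + ennreal (1 / \<delta>) * (\<integral>\<^sup>+p. ennreal (dist (fst p) (snd p)) \<partial>\<gamma>)
      + ennreal (1 / \<eta>) * (\<integral>\<^sup>+x. ennreal (w1 x * (1 - f1 x)) \<partial>\<mu>)"
    by (rule Pi_le_emeasure_le_thickening[OF plan C \<delta> w1 \<eta>])
  also have "\<dots> \<le> emeasure \<nu> {y. infdist y C < \<delta>} + emeasure \<mu> {x. w1 x < \<eta>}
      + ennreal (1 / \<delta>) * ennreal \<epsilon> + ennreal (1 / \<eta>) * ennreal \<epsilon>"
    using A D by (intro add_mono mult_left_mono order_refl) auto
  finally show "emeasure \<mu> C \<le> emeasure \<nu> {y. infdist y C < \<delta>} + emeasure \<mu> {x. w1 x < \<eta>} + ennreal e"
    unfolding bound[symmetric] by (simp add: ac_simps)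
qed

lemma ET_dist_nonpos_imp_measure_closed_le:
  assumes d: "ET_dist w1 w2 b lam \<mu> \<nu> \<le> 0" and b: "b > 0" and lam: "lam \<ge> 0"
    and \<mu>: "sets \<mu> = sets borel" "finite_measure \<mu>" and \<nu>: "sets \<nu> = sets borel" "finite_measure \<nu>"
    and w1: "w1 \<in> borel_measurable borel" "\<And>x. 0 < w1 x" and C: "closed C"
  shows "measure \<mu> C \<le> measure \<nu> C"
proof (cases "C = {}")
  case False
  interpret M: finite_measure \<mu> by fact
  interpret N: finite_measure \<nu> by fact
  have space: "space \<mu> = UNIV"
    using sets_eq_imp_space_eq[OF \<mu>(1)] by simp
  have w1\<mu>: "w1 \<in> borel_measurable \<mu>"
    using w1(1) measurable_cong_sets[OF \<mu>(1) refl] by blast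
  have "measure \<mu> C \<le> measure \<nu> {y. infdist y C < 1 / Suc n} + measure \<mu> {x. w1 x < 1 / Suc n}"
    for n :: nat
  proof -
    have "emeasure \<mu> C
        \<le> emeasure \<nu> {y. infdist y C < 1 / Suc n} + emeasure \<mu> {x. w1 x < 1 / Suc n}"
      using w1 by (intro ET_dist_nonpos_imp_emeasure_le_thickening[OF d b lam \<mu>(2) \<nu>(2) _ _ C])
        (auto simp: less_imp_le)
    then show ?thesis
      by (simp add: M.emeasure_eq_measure N.emeasure_eq_measure flip: ennreal_plus)
  qed
  moreover have "(\<lambda>n. measure \<nu> {y. infdist y C < 1 / Suc n} + measure \<mu> {x. w1 x < 1 / Suc n})
      \<longlonglongrightarrow> measure \<nu> C + 0"
    using tendsto_measure_thickening[OF \<nu> C False]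
      tendsto_measure_sublevel_zero[OF \<mu>(2) w1\<mu> w1(2)]
    unfolding space by (intro tendsto_add) auto
  ultimately show ?thesis
    by (intro LIMSEQ_le_const) auto
qed simp

theorem lemmaA1:
  fixes r :: "'a::metric_space"
    and w1 w2 :: "'a \<Rightarrow> real" and b lam :: real and \<mu> \<nu> :: "'a measure"
  assumes tree: "finite_rooted_metric_tree (UNIV :: 'a set) r"
    and b: "b > 0"
    and lam: "lam \<ge> 0"
    and w1: "\<forall>x. w1 x > 0" and w2: "\<forall>x. w2 x > 0"
    and w1m: "w1 \<in> borel_measurable borel" and w2m: "w2 \<in> borel_measurable borel"
    and mu: "\<mu> \<in> finite_borel_measures" and nu: "\<nu> \<in> finite_borel_measures"
    and d0: "ET_dist w1 w2 b lam \<mu> \<nu> = 0"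
  shows "\<mu> = \<nu>"
proof -
  have \<mu>: "sets \<mu> = sets borel" "finite_measure \<mu>" and \<nu>: "sets \<nu> = sets borel" "finite_measure \<nu>"
    using mu nu by (auto simp: finite_borel_measures_def)
  have d: "ET_dist w1 w2 b lam \<mu> \<nu> \<le> 0"
    using d0 by simp
  have "ET_dist w2 w1 b lam \<nu> \<mu> \<le> ET_dist w1 w2 b lam \<mu> \<nu>"
    using b by (intro ET_dist_transpose_le) simp
  then have d': "ET_dist w2 w1 b lam \<nu> \<mu> \<le> 0"
    using d0 by simp
  show ?thesis
  proof (rule finite_borel_measure_eqI_closed[OF \<mu> \<nu>])
    fix C :: "'a set" assume "closed C"
    then show "measure \<mu> C = measure \<nu> C"
      using ET_dist_nonpos_imp_measure_closed_le[OF d b lam \<mu> \<nu> w1m] w1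
        ET_dist_nonpos_imp_measure_closed_le[OF d' b lam \<nu> \<mu> w2m] w2
      by (simp add: order_antisym)
  qed
qed

end
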